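(* Let $K_0$ and $K_1$ be fully exposed almost monotone $k$-singular long knots with the same underlying chord diagram, and use the resulting natural correspondence between their double points and between the $4k$ strands emanating from these double points. Suppose that, for each double point, $K_0$ and $K_1$ agree (up to reparametrization) on the small neighborhoods of corresponding double points, so that in particular corresponding strands enter the upper half plane $\{y>0\}$ at the same places and the parts of $K_0$ and $K_1$ lying over $\{y\le 0\}$ coincide. Then $K_0$ and $K_1$ are isotopic through $k$-singular long knots (i.e. they are the same singular knot).
   Context: A (singular) long knot is an immersion $K=(K_x,K_y,K_z):\mathbb R\to\mathbb R^3$ running from $(-\infty,0,-\infty)$ to $(\infty,0,\infty)$, embedded except at finitely many transverse double points; $k$-singular means exactly $k$ double points. The underlying chord diagram is the line with chords joining the pairs of parameters mapped to the same double point. $K$ is almost monotone if: $K_z(s)=s$ for all $s$ except in small neighborhoods of the double points; near the smaller of the two parameter values visiting a double point also $K_z(s)=s$, while near the larger one the knot dives vertically down to the lower strand at the double point and then climbs vertically back up; and the projection to the $xy$-plane lies in the upper half plane $\{y>0\}$ except possibly the projections of small neighborhoods of some double points, which may extend slightly into $\{y\le 0\}$. A double point whose projection lies in the lower half plane is exposed; $K$ is fully exposed if all its double points are exposed. *)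

theory Defs
  imports "HOL-Analysis.Analysis"
begin

type_synonym pt = "real \<times> real \<times> real"

definition px :: "pt \<Rightarrow> real" where "px p = fst p"
definition py :: "pt \<Rightarrow> real" where "py p = fst (snd p)"
definition pz :: "pt \<Rightarrow> real" where "pz p = snd (snd p)"

definition diag_line :: "real \<Rightarrow> pt" where "diag_line s = (s, 0, s)"

definition double_points :: "(real \<Rightarrow> pt) \<Rightarrow> (real \<times> real) set" where
  "double_points K = {(a, b). a < b \<and> K a = K b}"

definition chord_ends :: "(real \<Rightarrow> pt) \<Rightarrow> real set" where
  "chord_ends K = fst ` double_points K \<union> snd ` double_points K"

definition immersion :: "(real \<Rightarrow> pt) \<Rightarrow> bool" where
  "immersion K \<longleftrightarrow> K C1_differentiable_on UNIV \<and> (\<forall>s. vector_derivative K (at s) \<noteq> 0)"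

definition long_knot :: "(real \<Rightarrow> pt) \<Rightarrow> bool" where
  "long_knot K \<longleftrightarrow> immersion K
     \<and> ((\<lambda>s. K s - diag_line s) \<longlongrightarrow> 0) at_top
     \<and> ((\<lambda>s. K s - diag_line s) \<longlongrightarrow> 0) at_bot
     \<and> ((\<lambda>s. vector_derivative K (at s)) \<longlongrightarrow> (1, 0, 1)) at_top
     \<and> ((\<lambda>s. vector_derivative K (at s)) \<longlongrightarrow> (1, 0, 1)) at_bot"

definition k_singular :: "nat \<Rightarrow> (real \<Rightarrow> pt) \<Rightarrow> bool" where
  "k_singular k K \<longleftrightarrow> long_knot K
     \<and> finite (double_points K) \<and> card (double_points K) = k
     \<and> (\<forall>(a, b) \<in> double_points K. \<forall>(c, d) \<in> double_points K.
           (a, b) \<noteq> (c, d) \<longrightarrow> {a, b} \<inter> {c, d} = {})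
     \<and> (\<forall>(a, b) \<in> double_points K. \<forall>\<alpha> \<beta> :: real.
           \<alpha> *\<^sub>R vector_derivative K (at a) + \<beta> *\<^sub>R vector_derivative K (at b) = 0
           \<longrightarrow> \<alpha> = 0 \<and> \<beta> = 0)"

text \<open>The dive of the upper strand (parameter b) near a double point, inside the
  neighbourhood V of b: outside a subinterval [c,d] the height is z = s; on [c,d] the
  knot goes down to the double point and back, staying between the lower height and s,
  over the same side of the line y = 0 as the double point.\<close>
definition dive :: "(real \<Rightarrow> pt) \<Rightarrow> real \<Rightarrow> real set \<Rightarrow> bool" where
  "dive K b V \<longleftrightarrow> (\<exists>c d. c < b \<and> b < d \<and> {c..d} \<subseteq> V
     \<and> (\<forall>s \<in> V - {c..d}. pz (K s) = s)
     \<and> (\<forall>s \<in> {c..d}. pz (K b) \<le> pz (K s) \<and> pz (K s) \<le> s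
                     \<and> (py (K s) \<le> 0 \<longleftrightarrow> py (K b) \<le> 0)))"

definition almost_monotone_on :: "(real \<Rightarrow> pt) \<Rightarrow> (real \<Rightarrow> real set) \<Rightarrow> bool" where
  "almost_monotone_on K U \<longleftrightarrow>
     (\<forall>p \<in> chord_ends K. \<exists>l r. l < p \<and> p < r \<and> U p = {l<..<r})
     \<and> (\<forall>p \<in> chord_ends K. \<forall>q \<in> chord_ends K. p \<noteq> q \<longrightarrow> U p \<inter> U q = {})
     \<and> (\<forall>s. s \<notin> (\<Union>p \<in> chord_ends K. U p) \<longrightarrow> pz (K s) = s \<and> py (K s) > 0)
     \<and> (\<forall>(a, b) \<in> double_points K. (\<forall>s \<in> U a. pz (K s) = s) \<and> dive K b (U b))"

definition almost_monotone :: "(real \<Rightarrow> pt) \<Rightarrow> bool" where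
  "almost_monotone K \<longleftrightarrow> (\<exists>U. almost_monotone_on K U)"

definition fully_exposed :: "(real \<Rightarrow> pt) \<Rightarrow> bool" where
  "fully_exposed K \<longleftrightarrow> (\<forall>(a, b) \<in> double_points K. py (K a) \<le> 0)"

definition singular_isotopic :: "nat \<Rightarrow> (real \<Rightarrow> pt) \<Rightarrow> (real \<Rightarrow> pt) \<Rightarrow> bool" where
  "singular_isotopic k K0 K1 \<longleftrightarrow> (\<exists>H :: real \<Rightarrow> real \<Rightarrow> pt.
     H 0 = K0 \<and> H 1 = K1
     \<and> (\<forall>t \<in> {0..1}. k_singular k (H t))
     \<and> (\<exists>Dt Ds. (\<forall>t \<in> {0..1}. \<forall>s.
                   ((\<lambda>u. H u s) has_vector_derivative Dt t s) (at t within {0..1})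
                 \<and> (H t has_vector_derivative Ds t s) (at s))
               \<and> continuous_on ({0..1} \<times> UNIV) (\<lambda>(t, s). Dt t s)
               \<and> continuous_on ({0..1} \<times> UNIV) (\<lambda>(t, s). Ds t s))
     \<and> (\<forall>e > 0. \<exists>R. \<forall>t \<in> {0..1}. \<forall>s. R \<le> \<bar>s\<bar> \<longrightarrow>
           norm (H t s - diag_line s) < e
         \<and> norm (vector_derivative (H t) (at s) - (1, 0, 1)) < e))"

end

theory Submission
  imports Defs
begin

(* Near the double points K1 is K0 reparametrized by the inverse of phi.  On the parts of
   the neighbourhoods where both knots are level (height z = s) this forces phi to be the
   identity, so phi maps every neighbourhood onto itself and moves only a compact piece of
   each upper-strand neighbourhood.  With ch = inv phi there and ch = id elsewhere, the homotopy
     H t s = K0 ((1 - t) s + t ch s) + t (K1 s - K0 (ch s))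
   is K0 composed with an increasing diffeomorphism on the neighbourhoods, and the convex
   combination (1 - t) K0 + t K1 of two level curves over {y > 0} elsewhere.  The latter part
   cannot meet itself, since its height is the parameter, nor the former: by full exposure a
   point of K0 over {y > 0} is also level.  Hence the double points of H t are those of K0,
   transported, with the same tangent lines, and H is an isotopy of k-singular knots. *)

lemma reparametrization_has_real_derivative:
  fixes K0 K1 :: "real \<Rightarrow> 'a::real_inner" and ch :: "real \<Rightarrow> real"
  assumes d0: "(K0 has_vector_derivative v0) (at (ch s0))" and v0: "v0 \<noteq> 0"
    and d1: "(K1 has_vector_derivative v1) (at s0)"
    and N: "open N" "s0 \<in> N" and eq: "\<And>s. s \<in> N \<Longrightarrow> K1 s = K0 (ch s)"
    and cont: "isCont ch s0" and inj: "inj_on ch N"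
  shows "(ch has_real_derivative (v1 \<bullet> v0) / (v0 \<bullet> v0)) (at s0)"
proof -
  define u0 where "u0 = ch s0"
  define f where "f u = K0 u \<bullet> v0" for u
  define g where "g s = K1 s \<bullet> v0" for s
  have "(f has_real_derivative (v0 \<bullet> v0)) (at u0)"
    unfolding has_real_derivative_iff_has_vector_derivative f_def u0_def
    using bounded_linear.has_vector_derivative[OF bounded_linear_inner_left d0] by simp
  then have df: "((\<lambda>u. (f u - f u0) / (u - u0)) \<longlongrightarrow> v0 \<bullet> v0) (at u0)"
    by (simp add: has_field_derivative_iff)
  have "(g has_real_derivative (v1 \<bullet> v0)) (at s0)"
    unfolding has_real_derivative_iff_has_vector_derivative g_def
    using bounded_linear.has_vector_derivative[OF bounded_linear_inner_left d1] by simp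
  then have dg: "((\<lambda>s. (g s - g s0) / (s - s0)) \<longlongrightarrow> v1 \<bullet> v0) (at s0)"
    by (simp add: has_field_derivative_iff)
  have near_N: "eventually (\<lambda>s. s \<in> N \<and> s \<noteq> s0) (at s0)"
    using N by (simp add: eventually_at_topological) blast
  have ch_ne: "eventually (\<lambda>s. ch s \<noteq> u0) (at s0)"
    using near_N by eventually_elim (use inj N(2) in \<open>auto simp: u0_def inj_on_def\<close>)
  have ch_at: "filterlim ch (at u0) (at s0)"
    using cont ch_ne unfolding u0_def isCont_def by (rule filterlim_atI)
  have df_ch: "((\<lambda>s. (f (ch s) - f u0) / (ch s - u0)) \<longlongrightarrow> v0 \<bullet> v0) (at s0)"
    using filterlim_compose[OF df ch_at] by (simp add: o_def)
  have v0_sq: "v0 \<bullet> v0 \<noteq> 0" using v0 by simp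
  \<comment> \<open>\<open>g = f \<circ> ch\<close> near \<open>s0\<close>, so the ratio of the two difference quotients
    is that of \<open>ch\<close>\<close>
  have "eventually (\<lambda>s. ((g s - g s0) / (s - s0)) / ((f (ch s) - f u0) / (ch s - u0))
      = (ch s - ch s0) / (s - s0)) (at s0)"
    using near_N tendsto_imp_eventually_ne[OF df_ch v0_sq] ch_ne
  proof eventually_elim
    case (elim s)
    then have "g s - g s0 = f (ch s) - f u0" "f (ch s) - f u0 \<noteq> 0"
      using eq N(2) by (auto simp: f_def g_def u0_def)
    then show ?case using elim by (simp add: u0_def)
  qed
  moreover have "((\<lambda>s. ((g s - g s0) / (s - s0)) / ((f (ch s) - f u0) / (ch s - u0)))
      \<longlongrightarrow> (v1 \<bullet> v0) / (v0 \<bullet> v0)) (at s0)"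
    by (rule tendsto_divide[OF dg df_ch v0_sq])
  ultimately have "((\<lambda>s. (ch s - ch s0) / (s - s0)) \<longlongrightarrow> (v1 \<bullet> v0) / (v0 \<bullet> v0)) (at s0)"
    by (rule Lim_transform_eventually[rotated])
  then show ?thesis by (simp add: has_field_derivative_iff)
qed

lemma strict_mono_surj_image_greaterThanLessThan:
  fixes \<phi> :: "'a::linorder \<Rightarrow> 'b::linorder"
  assumes "strict_mono \<phi>" "surj \<phi>"
  shows "\<phi> ` {a<..<b} = {\<phi> a<..<\<phi> b}"
proof
  show "\<phi> ` {a<..<b} \<subseteq> {\<phi> a<..<\<phi> b}"
    using strict_mono_less[OF assms(1)] by auto
  show "{\<phi> a<..<\<phi> b} \<subseteq> \<phi> ` {a<..<b}"
  proof
    fix y assume y: "y \<in> {\<phi> a<..<\<phi> b}"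
    obtain x where "y = \<phi> x" using assms(2) by (metis surjD)
    then show "y \<in> \<phi> ` {a<..<b}" using y strict_mono_less[OF assms(1)] by auto
  qed
qed

lemma strict_mono_surj_inv_continuous:
  fixes \<phi> :: "real \<Rightarrow> real"
  assumes "strict_mono \<phi>" "surj \<phi>"
  shows "continuous_on UNIV (inv \<phi>)"
proof (rule continuous_onI_mono)
  show "open (range (inv \<phi>))"
    using assms by (simp add: strict_mono_imp_inj_on inj_imp_surj_inv)
  show "inv \<phi> x \<le> inv \<phi> y" if "x \<le> y" for x y
    using that assms by (metis strict_mono_less_eq surj_f_inv_f)
qed

lemma compact_core_of_finite_union:
  assumes "finite I"
    and "\<And>i. i \<in> I \<Longrightarrow> \<exists>F. compact F \<and> F \<subseteq> A i \<and> A i - F \<subseteq> B"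
  shows "\<exists>F. compact F \<and> F \<subseteq> (\<Union>i\<in>I. A i) \<and> (\<Union>i\<in>I. A i) - F \<subseteq> B"
  using assms
proof (induction I rule: finite_induct)
  case empty
  show ?case by auto
next
  case (insert i I)
  obtain F where F: "compact F" "F \<subseteq> A i" "A i - F \<subseteq> B"
    using insert.prems[of i] by blast
  have "\<exists>G. compact G \<and> G \<subseteq> (\<Union>j\<in>I. A j) \<and> (\<Union>j\<in>I. A j) - G \<subseteq> B"
    using insert.IH insert.prems by simp
  then obtain G where G: "compact G" "G \<subseteq> (\<Union>j\<in>I. A j)" "(\<Union>j\<in>I. A j) - G \<subseteq> B"
    by blast
  have "compact (F \<union> G)" using F(1) G(1) by (rule compact_Un)
  moreover have "F \<union> G \<subseteq> (\<Union>j\<in>insert i I. A j)" using F(2) G(2) by auto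
  moreover have "(\<Union>j\<in>insert i I. A j) - (F \<union> G) \<subseteq> B" using F(3) G(3) by auto
  ultimately show ?case by blast
qed

lemma norm_convex_combination_less:
  fixes a b :: "'a::real_normed_vector"
  assumes "t \<in> {0..1}" "norm a < e" "norm b < e"
  shows "norm ((1 - t) *\<^sub>R a + t *\<^sub>R b) < e"
  using convexD[OF convex_ball, of a 0 e b "1 - t" t] assms by simp

lemma immersionD:
  assumes "immersion K"
  shows "(K has_vector_derivative vector_derivative K (at s)) (at s)"
    and "continuous_on UNIV (\<lambda>s. vector_derivative K (at s))"
    and "vector_derivative K (at s) \<noteq> 0"
  using assms unfolding immersion_def C1_differentiable_on_eq
  by (auto simp: vector_derivative_works)

lemma long_knot_at_infinity:
  "long_knot K \<longleftrightarrow> immersion K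
     \<and> ((\<lambda>s. K s - diag_line s) \<longlongrightarrow> 0) at_infinity
     \<and> ((\<lambda>s. vector_derivative K (at s)) \<longlongrightarrow> (1, 0, 1)) at_infinity"
  unfolding long_knot_def at_infinity_eq_at_top_bot
  using filterlim_sup tendsto_mono[OF sup_ge1] tendsto_mono[OF sup_ge2] by blast

lemma pz_derivative_eq_1:
  assumes "(K has_vector_derivative v) (at s)" and "closed D" "s \<notin> D"
    and "\<And>u. u \<notin> D \<Longrightarrow> pz (K u) = u"
  shows "pz v = 1"
proof -
  have "bounded_linear pz"
    unfolding pz_def[abs_def] by (rule bounded_linear_compose[OF bounded_linear_snd bounded_linear_snd])
  then have "((\<lambda>u. pz (K u)) has_real_derivative pz v) (at s)"
    using bounded_linear.has_vector_derivative[OF _ assms(1)]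
    by (simp add: has_real_derivative_iff_has_vector_derivative)
  moreover have "((\<lambda>u. pz (K u)) has_real_derivative 1) (at s)"
    by (rule has_field_derivative_transform_within_open[OF DERIV_ident, of "- D"])
      (use assms in auto)
  ultimately show ?thesis by (rule DERIV_unique)
qed

lemma chord_endsE:
  assumes "p \<in> chord_ends K"
  obtains b where "(p, b) \<in> double_points K" | a where "(a, p) \<in> double_points K"
  using assms unfolding chord_ends_def by force

lemma almost_monotone_onD:
  assumes "almost_monotone_on K U"
  shows "p \<in> chord_ends K \<Longrightarrow> \<exists>l r. l < p \<and> p < r \<and> U p = {l<..<r}"
    and "s \<notin> (\<Union>p\<in>chord_ends K. U p) \<Longrightarrow> pz (K s) = s \<and> py (K s) > 0"
    and "(a, b) \<in> double_points K \<Longrightarrow> s \<in> U a \<Longrightarrow> pz (K s) = s"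
    and "(a, b) \<in> double_points K \<Longrightarrow> dive K b (U b)"
  using assms unfolding almost_monotone_on_def by fast+

lemma almost_monotone_on_height_above_axis:
  assumes am: "almost_monotone_on K U" and exposed: "fully_exposed K" and y: "py (K u) > 0"
  shows "pz (K u) = u"
proof (cases "u \<in> (\<Union>p\<in>chord_ends K. U p)")
  case False
  then show ?thesis using almost_monotone_onD(2)[OF am] by blast
next
  case True
  then obtain p where p: "p \<in> chord_ends K" "u \<in> U p" by blast
  then show ?thesis
  proof (cases rule: chord_endsE)
    case (1 b)
    then show ?thesis using almost_monotone_onD(3)[OF am] p by blast
  next
    case (2 a)
    have "dive K p (U p)" using almost_monotone_onD(4)[OF am 2] .
    then obtain c d where cd: "\<forall>s \<in> U p - {c..d}. pz (K s) = s"
      "\<forall>s \<in> {c..d}. py (K s) \<le> 0 \<longleftrightarrow> py (K p) \<le> 0"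
      unfolding dive_def by blast
    \<comment> \<open>on the dive the knot stays over the lower half plane, like the exposed double point\<close>
    have "py (K a) \<le> 0" using exposed 2 unfolding fully_exposed_def by fast
    moreover have "K a = K p" using 2 by (simp add: double_points_def)
    ultimately have "py (K p) \<le> 0" by simp
    then have "u \<notin> {c..d}" using cd(2) y by force
    then show ?thesis using cd(1) p by blast
  qed
qed

lemma k_singular_reparametrized:
  assumes K: "k_singular k K" and H: "long_knot H" and inj: "inj \<psi>"
    and dp: "double_points K = (\<lambda>(x, y). (\<psi> x, \<psi> y)) ` double_points H"
    and tangent: "\<And>s. s \<in> chord_ends H \<Longrightarrow>
      \<exists>c. c \<noteq> 0 \<and> vector_derivative H (at s) = c *\<^sub>R vector_derivative K (at (\<psi> s))"
  shows "k_singular k H"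
proof -
  let ?\<Psi> = "\<lambda>(x, y). (\<psi> x, \<psi> y)"
  have inj_pairs: "inj_on ?\<Psi> (double_points H)"
    using inj by (auto simp: inj_on_def inj_def)
  have image_dp: "(\<psi> a, \<psi> b) \<in> double_points K" if "(a, b) \<in> double_points H" for a b
    using that dp by force
  have finite: "finite (double_points H)" and card: "card (double_points H) = k"
    using K finite_image_iff[OF inj_pairs] card_image[OF inj_pairs]
    unfolding k_singular_def dp by auto
  have disjoint: "{a, b} \<inter> {c, d} = {}"
    if ab: "(a, b) \<in> double_points H" and cd: "(c, d) \<in> double_points H"
      and ne: "(a, b) \<noteq> (c, d)" for a b c d
  proof -
    have "(\<psi> a, \<psi> b) \<noteq> (\<psi> c, \<psi> d)" using ne inj by (auto simp: inj_def)
    then have "{\<psi> a, \<psi> b} \<inter> {\<psi> c, \<psi> d} = {}"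
      using K image_dp[OF ab] image_dp[OF cd] unfolding k_singular_def by blast
    then show ?thesis by auto
  qed
  have transversal: "\<alpha> = 0 \<and> \<beta> = 0"
    if ab: "(a, b) \<in> double_points H"
      and lin: "\<alpha> *\<^sub>R vector_derivative H (at a) + \<beta> *\<^sub>R vector_derivative H (at b) = 0"
    for a b \<alpha> \<beta>
  proof -
    have "a \<in> chord_ends H" "b \<in> chord_ends H" using ab unfolding chord_ends_def by force+
    then obtain c d where cd: "c \<noteq> 0" "d \<noteq> 0"
      "vector_derivative H (at a) = c *\<^sub>R vector_derivative K (at (\<psi> a))"
      "vector_derivative H (at b) = d *\<^sub>R vector_derivative K (at (\<psi> b))"
      using tangent by metis
    have "(\<alpha> * c) *\<^sub>R vector_derivative K (at (\<psi> a))
        + (\<beta> * d) *\<^sub>R vector_derivative K (at (\<psi> b)) = 0"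
      using lin unfolding cd by simp
    then have "\<alpha> * c = 0 \<and> \<beta> * d = 0"
      using K image_dp[OF ab] unfolding k_singular_def by blast
    then show ?thesis using cd by simp
  qed
  show ?thesis
    unfolding k_singular_def using H finite card disjoint transversal by blast
qed

section \<open>The isotopy induced by a local reparametrization\<close>

lemma continuous_on_compose_UNIV:
  "continuous_on UNIV g \<Longrightarrow> continuous_on S f \<Longrightarrow> continuous_on S (\<lambda>x. g (f x))"
  using continuous_on_compose2[of UNIV g S f] by simp

locale locally_reparametrized =
  fixes k :: nat and K0 K1 :: "real \<Rightarrow> pt" and ch :: "real \<Rightarrow> real" and N C :: "real set"
  assumes k_singular_K0: "k_singular k K0" and long_knot_K1: "long_knot K1"
    and open_N: "open N" and compact_C: "compact C" and C_subset_N: "C \<subseteq> N"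
    and continuous_ch: "continuous_on UNIV ch"
    and ch_outside_C: "\<And>s. s \<notin> C \<Longrightarrow> ch s = s"
    and inj_ch: "inj_on ch N"
    and K1_eq: "\<And>s. s \<in> N \<Longrightarrow> K1 s = K0 (ch s)"
    and segment_subset_N: "\<And>s. s \<in> N \<Longrightarrow> closed_segment s (ch s) \<subseteq> N"
    and height_outside_C: "\<And>s. s \<notin> C \<Longrightarrow> pz (K0 s) = s \<and> pz (K1 s) = s"
    and above_axis_outside_N: "\<And>s. s \<notin> N \<Longrightarrow> py (K0 s) > 0 \<and> py (K1 s) > 0"
    and height_above_axis: "\<And>s. py (K0 s) > 0 \<Longrightarrow> pz (K0 s) = s"
    and chord_ends_subset_N: "chord_ends K0 \<subseteq> N"
begin

definition V0 :: "real \<Rightarrow> pt" where "V0 s = vector_derivative K0 (at s)"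
definition V1 :: "real \<Rightarrow> pt" where "V1 s = vector_derivative K1 (at s)"

lemma long_knot_K0: "long_knot K0"
  using k_singular_K0 unfolding k_singular_def by blast

lemma K0_derivative:
  "(K0 has_vector_derivative V0 s) (at s)" "continuous_on UNIV V0" "V0 s \<noteq> 0"
  using immersionD[of K0] long_knot_K0 unfolding long_knot_def V0_def by auto

lemma K1_derivative:
  "(K1 has_vector_derivative V1 s) (at s)" "continuous_on UNIV V1" "V1 s \<noteq> 0"
  using immersionD[of K1] long_knot_K1 unfolding long_knot_def V1_def by auto

lemma closed_C: "closed C"
  using compact_C by (rule compact_imp_closed)

lemma outside_C_far: obtains R where "\<And>s. R < \<bar>s\<bar> \<Longrightarrow> s \<notin> C"
proof -
  obtain R where "\<forall>x\<in>C. \<bar>x\<bar> \<le> R"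
    using compact_imp_bounded[OF compact_C] unfolding bounded_real by blast
  then show thesis using that[of R] by force
qed

(* The derivative of ch: on N it must satisfy V1 s = ch' s *R V0 (ch s), and projecting
   onto V0 (ch s) reads ch' s off. *)
definition dch :: "real \<Rightarrow> real" where
  "dch s = (if s \<in> N then (V1 s \<bullet> V0 (ch s)) / (V0 (ch s) \<bullet> V0 (ch s)) else 1)"

lemma ch_has_derivative_outside_C: "s \<notin> C \<Longrightarrow> (ch has_real_derivative 1) (at s)"
  by (rule has_field_derivative_transform_within_open[OF DERIV_ident, of "- C"])
    (use closed_C ch_outside_C in auto)

lemma ch_has_derivative: "(ch has_real_derivative dch s) (at s)"
proof (cases "s \<in> N")
  case True
  have "isCont ch s" using continuous_ch continuous_on_eq_continuous_at by blast
  then show ?thesis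
    using reparametrization_has_real_derivative[OF K0_derivative(1,3) K1_derivative(1)
        open_N True K1_eq _ inj_ch] True
    by (simp add: dch_def)
next
  case False
  then show ?thesis using ch_has_derivative_outside_C C_subset_N by (auto simp: dch_def)
qed

lemma dch_outside_C: "s \<notin> C \<Longrightarrow> dch s = 1"
  using DERIV_unique[OF ch_has_derivative ch_has_derivative_outside_C] by blast

lemma isCont_dch: "isCont dch s"
proof (cases "s \<in> N")
  case True
  have "isCont ch s" "isCont V0 (ch s)" "isCont V1 s"
    using K0_derivative(2) K1_derivative(2) continuous_ch
    by (simp_all add: continuous_on_eq_continuous_at)
  then have "isCont (\<lambda>s. V0 (ch s)) s" "isCont V1 s"
    using isCont_o2 by blast+
  then have "isCont (\<lambda>s. (V1 s \<bullet> V0 (ch s)) / (V0 (ch s) \<bullet> V0 (ch s))) s"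
    using K0_derivative(3) by (intro continuous_intros) auto
  moreover have "eventually (\<lambda>x. dch x = (V1 x \<bullet> V0 (ch x)) / (V0 (ch x) \<bullet> V0 (ch x))) (nhds s)"
    unfolding eventually_nhds using open_N True by (auto simp: dch_def)
  ultimately show ?thesis by (simp add: isCont_cong)
next
  case False
  then have "eventually (\<lambda>x. dch x = 1) (nhds s)"
    unfolding eventually_nhds using closed_C C_subset_N dch_outside_C
    by (intro exI[of _ "- C"]) auto
  then show ?thesis using isCont_cong[of dch "\<lambda>_. 1" s] by simp
qed

lemma V1_on_N: "s \<in> N \<Longrightarrow> V1 s = dch s *\<^sub>R V0 (ch s)"
proof -
  assume s: "s \<in> N"
  have "((K0 \<circ> ch) has_vector_derivative dch s *\<^sub>R V0 (ch s)) (at s)"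
    using ch_has_derivative K0_derivative(1)
    by (intro vector_diff_chain_at) (simp_all add: has_real_derivative_iff_has_vector_derivative)
  then have "(K1 has_vector_derivative dch s *\<^sub>R V0 (ch s)) (at s)"
    by (rule has_vector_derivative_transform_within_open[OF _ open_N s]) (simp add: K1_eq)
  then show ?thesis using vector_derivative_unique_at K1_derivative(1) by blast
qed

lemma dch_pos: "dch s > 0"
proof (rule ccontr)
  have dch_ne: "dch x \<noteq> 0" for x
    using V1_on_N K1_derivative(3) dch_outside_C C_subset_N by (cases "x \<in> N") fastforce+
  assume "\<not> dch s > 0"
  then have neg: "dch s < 0" using dch_ne[of s] by linarith
  obtain R where R: "\<And>x. R < \<bar>x\<bar> \<Longrightarrow> x \<notin> C" using outside_C_far by blast
  define b where "b = \<bar>s\<bar> + \<bar>R\<bar> + 1"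
  have "continuous_on {s..b} dch"
    using isCont_dch by (simp add: continuous_at_imp_continuous_on)
  moreover have "dch b = 1" "s \<le> b" using R dch_outside_C unfolding b_def by auto
  ultimately obtain x where "dch x = 0"
    using IVT'[of dch s 0 b] neg by auto
  then show False using dch_ne by blast
qed

definition slide :: "real \<Rightarrow> real \<Rightarrow> real" where
  "slide t s = (1 - t) * s + t * ch s"

definition dslide :: "real \<Rightarrow> real \<Rightarrow> real" where
  "dslide t s = (1 - t) + t * dch s"

definition H :: "real \<Rightarrow> real \<Rightarrow> pt" where
  "H t s = K0 (slide t s) + t *\<^sub>R (K1 s - K0 (ch s))"

definition H_ds :: "real \<Rightarrow> real \<Rightarrow> pt" where
  "H_ds t s = dslide t s *\<^sub>R V0 (slide t s) + t *\<^sub>R (V1 s - dch s *\<^sub>R V0 (ch s))"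

definition H_dt :: "real \<Rightarrow> real \<Rightarrow> pt" where
  "H_dt t s = (ch s - s) *\<^sub>R V0 (slide t s) + (K1 s - K0 (ch s))"

lemma H_0: "H 0 = K0" and H_1: "H 1 = K1"
  by (auto simp: H_def slide_def)

lemma slide_has_derivative: "(slide t has_real_derivative dslide t s) (at s)"
  unfolding slide_def dslide_def by (auto intro!: derivative_eq_intros ch_has_derivative)

lemma H_has_derivative_param: "(H t has_vector_derivative H_ds t s) (at s)"
proof -
  have "((K0 \<circ> slide t) has_vector_derivative dslide t s *\<^sub>R V0 (slide t s)) (at s)"
    "((K0 \<circ> ch) has_vector_derivative dch s *\<^sub>R V0 (ch s)) (at s)"
    using slide_has_derivative ch_has_derivative K0_derivative(1)
    by (auto intro!: vector_diff_chain_at simp: has_real_derivative_iff_has_vector_derivative)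
  then show ?thesis
    unfolding H_def H_ds_def
    using K1_derivative(1) by (auto intro!: derivative_eq_intros simp: o_def)
qed

lemma H_has_derivative_time: "((\<lambda>u. H u s) has_vector_derivative H_dt t s) (at t within {0..1})"
proof -
  have "((\<lambda>u. slide u s) has_vector_derivative (ch s - s)) (at t within {0..1})"
    unfolding slide_def has_real_derivative_iff_has_vector_derivative[symmetric]
    by (auto intro!: derivative_eq_intros)
  then have "((\<lambda>u. K0 (slide u s)) has_vector_derivative (ch s - s) *\<^sub>R V0 (slide t s))
      (at t within {0..1})"
    using vector_diff_chain_within[OF _ has_vector_derivative_at_within[OF K0_derivative(1)]]
    by (simp add: o_def)
  then show ?thesis
    unfolding H_def H_dt_def by (auto intro!: derivative_eq_intros)
qed

lemma continuous_H_ds: "continuous_on S (\<lambda>(t, s). H_ds t s)"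
  and continuous_H_dt: "continuous_on S (\<lambda>(t, s). H_dt t s)"
proof -
  have "continuous_on UNIV K0" "continuous_on UNIV K1"
    using K0_derivative(1) K1_derivative(1) has_vector_derivative_continuous
    by (blast intro: continuous_at_imp_continuous_on)+
  moreover have "continuous_on UNIV dch"
    using isCont_dch by (simp add: continuous_at_imp_continuous_on)
  ultimately show "continuous_on S (\<lambda>(t, s). H_ds t s)" "continuous_on S (\<lambda>(t, s). H_dt t s)"
    unfolding H_ds_def H_dt_def dslide_def slide_def case_prod_beta
    using continuous_ch K0_derivative(2) K1_derivative(2)
    by (auto intro!: continuous_intros continuous_on_compose_UNIV[where g = ch]
        continuous_on_compose_UNIV[where g = dch] continuous_on_compose_UNIV[where g = V0]
        continuous_on_compose_UNIV[where g = V1] continuous_on_compose_UNIV[where g = K0]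
        continuous_on_compose_UNIV[where g = K1])
qed

lemma dslide_pos:
  assumes "t \<in> {0..1}"
  shows "dslide t s > 0"
proof (cases "t = 0")
  case False
  then have "t * dch s > 0" using assms dch_pos[of s] by simp
  then show ?thesis using assms by (simp add: dslide_def)
qed (simp add: dslide_def)

lemma strict_mono_slide:
  assumes "t \<in> {0..1}"
  shows "strict_mono (slide t)"
proof (rule strict_monoI)
  show "slide t x < slide t y" if "x < y" for x y
    using DERIV_pos_imp_increasing[OF that] slide_has_derivative dslide_pos[OF assms] by blast
qed

lemma slide_outside_C: "s \<notin> C \<Longrightarrow> slide t s = s"
  using ch_outside_C by (simp add: slide_def algebra_simps)

lemma surj_slide:
  assumes t: "t \<in> {0..1}"
  shows "surj (slide t)"
proof -
  have "\<exists>x. slide t x = y" for y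
  proof -
    obtain R where R: "\<And>x. R < \<bar>x\<bar> \<Longrightarrow> x \<notin> C" using outside_C_far by blast
    define b where "b = \<bar>y\<bar> + \<bar>R\<bar> + 1"
    have "slide t (- b) = - b" "slide t b = b"
      using R slide_outside_C unfolding b_def by auto
    moreover have "continuous_on {- b..b} (slide t)"
      using slide_has_derivative DERIV_isCont by (blast intro: continuous_at_imp_continuous_on)
    ultimately show ?thesis
      using IVT'[of "slide t" "- b" y b] unfolding b_def by force
  qed
  then show ?thesis by (metis surjI)
qed

lemma slide_in_N:
  assumes "s \<in> N" "t \<in> {0..1}"
  shows "slide t s \<in> N"
proof -
  have "slide t s \<in> closed_segment s (ch s)"
    unfolding slide_def in_segment(1) using assms(2) by auto
  then show ?thesis using segment_subset_N[OF assms(1)] by blast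
qed

lemma H_on_N: "s \<in> N \<Longrightarrow> H t s = K0 (slide t s)"
  by (simp add: H_def K1_eq)

lemma H_outside_C: "s \<notin> C \<Longrightarrow> H t s = (1 - t) *\<^sub>R K0 s + t *\<^sub>R K1 s"
  using ch_outside_C slide_outside_C by (simp add: H_def algebra_simps)

lemma H_outside_N:
  assumes "s \<notin> N" "t \<in> {0..1}"
  shows "pz (H t s) = s" "py (H t s) > 0"
proof -
  have "s \<notin> C" using assms C_subset_N by blast
  then have H: "H t s = (1 - t) *\<^sub>R K0 s + t *\<^sub>R K1 s"
    and heights: "pz (K0 s) = s" "pz (K1 s) = s"
    using H_outside_C height_outside_C by auto
  show "pz (H t s) = s" unfolding H using heights by (simp add: pz_def algebra_simps)
  have "(1 - t) * py (K0 s) \<ge> 0" "t * py (K1 s) \<ge> 0"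
    "(1 - t) * py (K0 s) > 0 \<or> t * py (K1 s) > 0"
    using above_axis_outside_N[OF assms(1)] assms(2) by (auto simp: less_eq_real_def)
  then show "py (H t s) > 0" unfolding H by (simp add: py_def) linarith
qed

lemma double_point_H_in_N:
  assumes t: "t \<in> {0..1}" and xy: "(x, y) \<in> double_points (H t)"
  shows "x \<in> N" "y \<in> N"
proof -
  \<comment> \<open>both a point of \<open>H t\<close> outside \<open>N\<close> and a point of \<open>K0\<close> above the axis
    have height equal to their parameter\<close>
  have no_mixed: "H t u \<noteq> H t v" if u: "u \<notin> N" and v: "v \<in> N" for u v
  proof
    assume eq: "H t u = H t v"
    have "py (K0 (slide t v)) > 0"
      using H_outside_N(2)[OF u t] unfolding eq H_on_N[OF v] .
    then have "pz (K0 (slide t v)) = slide t v" by (rule height_above_axis)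
    moreover have "pz (K0 (slide t v)) = u"
      using H_outside_N(1)[OF u t] unfolding eq H_on_N[OF v] .
    ultimately show False using slide_in_N[OF v t] u by simp
  qed
  have xy': "x < y" "H t x = H t y" using xy by (auto simp: double_points_def)
  have "x \<in> N \<or> y \<in> N"
  proof (rule ccontr)
    assume "\<not> (x \<in> N \<or> y \<in> N)"
    then have "pz (H t x) = x" "pz (H t y) = y" using H_outside_N(1)[OF _ t] by auto
    then show False using xy' by simp
  qed
  then show "x \<in> N" "y \<in> N" using no_mixed[of x y] no_mixed[of y x] xy'(2) by auto
qed

lemma double_points_H:
  assumes t: "t \<in> {0..1}"
  shows "double_points K0 = (\<lambda>(x, y). (slide t x, slide t y)) ` double_points (H t)"
proof
  show "(\<lambda>(x, y). (slide t x, slide t y)) ` double_points (H t) \<subseteq> double_points K0"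
  proof clarify
    fix x y assume xy: "(x, y) \<in> double_points (H t)"
    then have "x < y" "K0 (slide t x) = K0 (slide t y)"
      using double_point_H_in_N[OF t xy] H_on_N by (auto simp: double_points_def)
    then show "(slide t x, slide t y) \<in> double_points K0"
      using strict_mono_slide[OF t] by (simp add: double_points_def strict_mono_less)
  qed
  show "double_points K0 \<subseteq> (\<lambda>(x, y). (slide t x, slide t y)) ` double_points (H t)"
  proof clarify
    fix a b assume ab: "(a, b) \<in> double_points K0"
    have "a \<in> N" "b \<in> N"
      using chord_ends_subset_N ab unfolding chord_ends_def by force+
    obtain x y where xy: "a = slide t x" "b = slide t y"
      using surj_slide[OF t] by (metis surjD)
    have in_N: "x \<in> N" if "slide t x \<in> N" for x
      using that C_subset_N slide_outside_C[of x t] by (cases "x \<in> C") auto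
    have "x \<in> N" "y \<in> N"
      using in_N \<open>a \<in> N\<close> \<open>b \<in> N\<close> unfolding xy by blast+
    moreover have "x < y"
      using ab strict_mono_slide[OF t] unfolding xy by (simp add: double_points_def strict_mono_less)
    ultimately have "(x, y) \<in> double_points (H t)"
      using ab H_on_N unfolding xy by (simp add: double_points_def)
    then show "(a, b) \<in> (\<lambda>(x, y). (slide t x, slide t y)) ` double_points (H t)"
      unfolding xy by force
  qed
qed

lemma vector_derivative_H: "vector_derivative (H t) (at s) = H_ds t s"
  using vector_derivative_at[OF H_has_derivative_param] .

lemma H_ds_on_N: "s \<in> N \<Longrightarrow> H_ds t s = dslide t s *\<^sub>R V0 (slide t s)"
  by (simp add: H_ds_def V1_on_N)

lemma H_ds_outside_C: "s \<notin> C \<Longrightarrow> H_ds t s = (1 - t) *\<^sub>R V0 s + t *\<^sub>R V1 s"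
  using dch_outside_C ch_outside_C slide_outside_C
  by (simp add: H_ds_def dslide_def algebra_simps)

lemma H_ds_nonzero:
  assumes t: "t \<in> {0..1}"
  shows "H_ds t s \<noteq> 0"
proof (cases "s \<in> N")
  case True
  have "dslide t s \<noteq> 0" using dslide_pos[OF t, of s] by simp
  then show ?thesis using H_ds_on_N[OF True] K0_derivative(3) by simp
next
  case False
  then have s: "s \<notin> C" using C_subset_N by blast
  have "pz (V0 s) = 1" "pz (V1 s) = 1"
    using pz_derivative_eq_1[OF K0_derivative(1) closed_C s]
      pz_derivative_eq_1[OF K1_derivative(1) closed_C s] height_outside_C by blast+
  then have "pz (H_ds t s) = 1"
    by (simp add: H_ds_outside_C[OF s] pz_def algebra_simps)
  then show ?thesis by (auto simp: pz_def)
qed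

lemma H_close_to_line:
  assumes e: "e > 0"
  shows "eventually (\<lambda>s. \<forall>t\<in>{0..1}.
    norm (H t s - diag_line s) < e \<and> norm (H_ds t s - (1, 0, 1)) < e) at_infinity"
proof -
  obtain R where R: "\<And>s. R < \<bar>s\<bar> \<Longrightarrow> s \<notin> C" using outside_C_far by blast
  have "eventually (\<lambda>s. s \<notin> C) at_infinity"
    unfolding eventually_at_infinity using R by (intro exI[of _ "R + 1"]) auto
  moreover have "eventually (\<lambda>s. norm (K0 s - diag_line s) < e) at_infinity"
    "eventually (\<lambda>s. norm (K1 s - diag_line s) < e) at_infinity"
    "eventually (\<lambda>s. norm (V0 s - (1, 0, 1)) < e) at_infinity"
    "eventually (\<lambda>s. norm (V1 s - (1, 0, 1)) < e) at_infinity"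
    using long_knot_K0 long_knot_K1 e
    unfolding long_knot_at_infinity V0_def[abs_def] V1_def[abs_def] tendsto_iff dist_norm
    by auto
  ultimately show ?thesis
  proof eventually_elim
    case (elim s)
    have "H t s - diag_line s = (1 - t) *\<^sub>R (K0 s - diag_line s) + t *\<^sub>R (K1 s - diag_line s)"
      "H_ds t s - (1, 0, 1) = (1 - t) *\<^sub>R (V0 s - (1, 0, 1)) + t *\<^sub>R (V1 s - (1, 0, 1))" for t
      unfolding H_outside_C[OF elim(1)] H_ds_outside_C[OF elim(1)] by (simp_all add: algebra_simps)
    then show ?case
      using elim by (simp add: norm_convex_combination_less)
  qed
qed

lemma long_knot_H:
  assumes t: "t \<in> {0..1}"
  shows "long_knot (H t)"
proof -
  have "continuous_on UNIV (\<lambda>s. H_ds t s)"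
    using continuous_on_compose_UNIV[OF continuous_H_ds[of UNIV], of UNIV "\<lambda>s. (t, s)"]
    by (simp add: continuous_on_Pair)
  then have "immersion (H t)"
    unfolding immersion_def C1_differentiable_on_def vector_derivative_H
    using H_has_derivative_param H_ds_nonzero[OF t] by blast
  moreover have "((\<lambda>s. H t s - diag_line s) \<longlongrightarrow> 0) at_infinity"
    "((\<lambda>s. H_ds t s) \<longlongrightarrow> (1, 0, 1)) at_infinity"
    unfolding tendsto_iff dist_norm
    using eventually_mono[OF H_close_to_line] t by auto
  ultimately show ?thesis
    unfolding long_knot_at_infinity vector_derivative_H by blast
qed

lemma k_singular_H:
  assumes t: "t \<in> {0..1}"
  shows "k_singular k (H t)"
proof (rule k_singular_reparametrized[OF k_singular_K0 long_knot_H[OF t]])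
  show "inj (slide t)" using strict_mono_slide[OF t] by (rule strict_mono_imp_inj_on)
  show "double_points K0 = (\<lambda>(x, y). (slide t x, slide t y)) ` double_points (H t)"
    using double_points_H[OF t] .
  fix s assume "s \<in> chord_ends (H t)"
  then have "s \<in> N"
    using double_point_H_in_N[OF t] unfolding chord_ends_def by force
  then show "\<exists>c. c \<noteq> 0 \<and> vector_derivative (H t) (at s) = c *\<^sub>R vector_derivative K0 (at (slide t s))"
    using dslide_pos[OF t, of s]
    by (intro exI[of _ "dslide t s"]) (simp add: vector_derivative_H H_ds_on_N V0_def)
qed

theorem singular_isotopic_K0_K1: "singular_isotopic k K0 K1"
  unfolding singular_isotopic_def
proof (intro exI conjI)
  show "H 0 = K0" by (rule H_0)
  show "H 1 = K1" by (rule H_1)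
  show "\<forall>t\<in>{0..1}. k_singular k (H t)" using k_singular_H by blast
  show "\<forall>t\<in>{0..1}. \<forall>s. ((\<lambda>u. H u s) has_vector_derivative H_dt t s) (at t within {0..1})
      \<and> (H t has_vector_derivative H_ds t s) (at s)"
    using H_has_derivative_time H_has_derivative_param by blast
  show "continuous_on ({0..1} \<times> UNIV) (\<lambda>(t, s). H_dt t s)" by (rule continuous_H_dt)
  show "continuous_on ({0..1} \<times> UNIV) (\<lambda>(t, s). H_ds t s)" by (rule continuous_H_ds)
  show "\<forall>e>0. \<exists>R. \<forall>t\<in>{0..1}. \<forall>s. R \<le> \<bar>s\<bar> \<longrightarrow>
      norm (H t s - diag_line s) < e \<and> norm (vector_derivative (H t) (at s) - (1, 0, 1)) < e"
    using H_close_to_line unfolding eventually_at_infinity real_norm_def vector_derivative_H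
    by fast
qed

end

section \<open>Knots matched near their double points\<close>

locale matched_knots =
  fixes K0 K1 :: "real \<Rightarrow> pt" and \<phi> :: "real \<Rightarrow> real" and U :: "real \<Rightarrow> real set"
  assumes strict_mono_\<phi>: "strict_mono \<phi>" and surj_\<phi>: "surj \<phi>"
    and double_points_K1: "double_points K1 = (\<lambda>(a, b). (\<phi> a, \<phi> b)) ` double_points K0"
    and almost_monotone_K0: "almost_monotone_on K0 U"
    and almost_monotone_K1: "almost_monotone_on K1 (\<lambda>q. \<phi> ` U (inv \<phi> q))"
    and K1_\<phi>_eq: "\<And>p s. p \<in> chord_ends K0 \<Longrightarrow> s \<in> U p \<Longrightarrow> K1 (\<phi> s) = K0 s"
begin

lemma inv_\<phi>: "inv \<phi> (\<phi> x) = x" "\<phi> (inv \<phi> y) = y"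
  using strict_mono_\<phi> surj_\<phi> by (simp_all add: strict_mono_imp_inj_on surj_f_inv_f)

lemma double_point_K1: "(a, b) \<in> double_points K0 \<Longrightarrow> (\<phi> a, \<phi> b) \<in> double_points K1"
  unfolding double_points_K1 by force

lemma chord_ends_K1: "chord_ends K1 = \<phi> ` chord_ends K0"
  unfolding chord_ends_def double_points_K1 image_Un image_image by (auto simp: case_prod_beta)

lemma U_interval: "p \<in> chord_ends K0 \<Longrightarrow> \<exists>l r. l < p \<and> p < r \<and> U p = {l<..<r}"
  using almost_monotone_onD(1)[OF almost_monotone_K0] .

lemma level_pins_\<phi>:
  assumes "p \<in> chord_ends K0" "u \<in> U p" "pz (K0 u) = u" "pz (K1 (\<phi> u)) = \<phi> u"
  shows "\<phi> u = u"
  using assms K1_\<phi>_eq by metis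

lemma level_frame:
  assumes p: "p \<in> chord_ends K0"
  obtains \<alpha> \<beta> where "\<alpha> \<le> \<beta>" "{\<alpha>..\<beta>} \<subseteq> U p"
    "\<And>u. u \<in> U p - {\<alpha><..<\<beta>} \<Longrightarrow> \<phi> u = u \<and> pz (K0 u) = u"
proof -
  obtain l r where lr: "l < p" "p < r" "U p = {l<..<r}" using U_interval[OF p] by blast
  have U1: "\<phi> ` U (inv \<phi> (\<phi> p)) = \<phi> ` U p" by (simp add: inv_\<phi>)
  from p show thesis
  proof (cases rule: chord_endsE)
    case (1 b)
    have "pz (K0 u) = u" "pz (K1 (\<phi> u)) = \<phi> u" if "u \<in> U p" for u
      using that almost_monotone_onD(3)[OF almost_monotone_K0 1]
        almost_monotone_onD(3)[OF almost_monotone_K1 double_point_K1[OF 1]] U1 by auto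
    then show thesis
      using that[of p p] lr level_pins_\<phi>[OF p] by auto
  next
    case (2 a)
    obtain c d where cd: "c < p" "p < d" "{c..d} \<subseteq> U p"
      "\<And>s. s \<in> U p - {c..d} \<Longrightarrow> pz (K0 s) = s"
      using almost_monotone_onD(4)[OF almost_monotone_K0 2] unfolding dive_def by blast
    obtain c' d' where cd': "c' < \<phi> p" "\<phi> p < d'" "{c'..d'} \<subseteq> \<phi> ` U p"
      "\<And>s. s \<in> \<phi> ` U p - {c'..d'} \<Longrightarrow> pz (K1 s) = s"
      using almost_monotone_onD(4)[OF almost_monotone_K1 double_point_K1[OF 2]]
      unfolding dive_def U1 by blast
    have "c' \<in> \<phi> ` U p" "d' \<in> \<phi> ` U p" using cd'(1-3) by auto
    then obtain u1 u2 where u: "u1 \<in> U p" "c' = \<phi> u1" "u2 \<in> U p" "d' = \<phi> u2"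
      by blast
    have "c \<in> U p" "d \<in> U p" using cd(1-3) by auto
    then have bounds: "l < c" "d < r" "l < u1" "u2 < r"
      using u(1,3) lr(3) by auto
    define \<alpha> where "\<alpha> = (l + min c u1) / 2"
    define \<beta> where "\<beta> = (max d u2 + r) / 2"
    have \<alpha>: "l < \<alpha>" "\<alpha> < c" "\<alpha> < u1" and \<beta>: "d < \<beta>" "u2 < \<beta>" "\<beta> < r"
      using bounds unfolding \<alpha>_def \<beta>_def by (simp_all add: field_simps)
    show thesis
    proof (rule that)
      show "\<alpha> \<le> \<beta>" using \<alpha> \<beta> cd(1,2) by linarith
      show "{\<alpha>..\<beta>} \<subseteq> U p" unfolding lr(3) using \<alpha>(1) \<beta>(3) by auto
      fix u assume "u \<in> U p - {\<alpha><..<\<beta>}"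
      then have u_out: "u \<in> U p" "u < c \<and> u < u1 \<or> d < u \<and> u2 < u"
        using \<alpha> \<beta> by auto
      then have "pz (K0 u) = u" using cd(4) by force
      moreover have "\<phi> u \<notin> {c'..d'}"
        using u_out(2) u strict_mono_less_eq[OF strict_mono_\<phi>] by auto
      then have "pz (K1 (\<phi> u)) = \<phi> u" using cd'(4) u_out(1) by blast
      ultimately show "\<phi> u = u \<and> pz (K0 u) = u" using level_pins_\<phi>[OF p u_out(1)] by blast
    qed
  qed
qed

lemma image_U:
  assumes p: "p \<in> chord_ends K0"
  shows "\<phi> ` U p = U p"
proof -
  obtain \<alpha> \<beta> where frame: "\<alpha> \<le> \<beta>" "{\<alpha>..\<beta>} \<subseteq> U p"
    and fixed: "\<And>u. u \<in> U p - {\<alpha><..<\<beta>} \<Longrightarrow> \<phi> u = u \<and> pz (K0 u) = u"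
    using level_frame[OF p] by blast
  have "\<phi> \<alpha> = \<alpha>" "\<phi> \<beta> = \<beta>" using frame fixed[of \<alpha>] fixed[of \<beta>] by auto
  then have I: "\<phi> ` {\<alpha><..<\<beta>} = {\<alpha><..<\<beta>}"
    using strict_mono_surj_image_greaterThanLessThan[OF strict_mono_\<phi> surj_\<phi>] by simp
  have inside: "{\<alpha><..<\<beta>} \<subseteq> U p"
    using frame(2) greaterThanLessThan_subseteq_atLeastAtMost_iff by blast
  show ?thesis
  proof
    show "\<phi> ` U p \<subseteq> U p"
    proof clarify
      fix u assume u: "u \<in> U p"
      show "\<phi> u \<in> U p"
      proof (cases "u \<in> {\<alpha><..<\<beta>}")
        case True
        then show ?thesis using I inside by blast
      next
        case False
        then show ?thesis using fixed[of u] u by simp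
      qed
    qed
    show "U p \<subseteq> \<phi> ` U p"
    proof
      fix y assume y: "y \<in> U p"
      show "y \<in> \<phi> ` U p"
      proof (cases "y \<in> {\<alpha><..<\<beta>}")
        case True
        then show ?thesis using I inside by blast
      next
        case False
        then show ?thesis using fixed[of y] y by (metis DiffI imageI)
      qed
    qed
  qed
qed

definition N :: "real set" where "N = (\<Union>p\<in>chord_ends K0. U p)"

lemma open_N: "open N"
  unfolding N_def using U_interval by (metis open_UN open_greaterThanLessThan)

lemma chord_ends_subset_N: "chord_ends K0 \<subseteq> N"
  unfolding N_def using U_interval by fastforce

lemma U_K1_union: "(\<Union>q\<in>chord_ends K1. \<phi> ` U (inv \<phi> q)) = N"
  unfolding N_def chord_ends_K1 by (simp add: inv_\<phi> image_U)

lemma outside_N: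
  assumes "s \<notin> N"
  shows "pz (K0 s) = s \<and> py (K0 s) > 0" "pz (K1 s) = s \<and> py (K1 s) > 0"
  using assms almost_monotone_onD(2)[OF almost_monotone_K0, of s]
    almost_monotone_onD(2)[OF almost_monotone_K1, of s]
  unfolding U_K1_union by (auto simp: N_def)

lemma compact_core:
  assumes "finite (double_points K0)"
  obtains C where "compact C" "C \<subseteq> N" "\<And>u. u \<in> N - C \<Longrightarrow> \<phi> u = u \<and> pz (K0 u) = u"
proof -
  let ?level = "{u. \<phi> u = u \<and> pz (K0 u) = u}"
  have "finite (chord_ends K0)" using assms by (simp add: chord_ends_def)
  moreover have "\<exists>F. compact F \<and> F \<subseteq> U p \<and> U p - F \<subseteq> ?level"
    if p: "p \<in> chord_ends K0" for p
  proof -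
    obtain \<alpha> \<beta> where frame: "\<alpha> \<le> \<beta>" "{\<alpha>..\<beta>} \<subseteq> U p"
      and fixed: "\<And>u. u \<in> U p - {\<alpha><..<\<beta>} \<Longrightarrow> \<phi> u = u \<and> pz (K0 u) = u"
      using level_frame[OF p] by blast
    have "U p - {\<alpha>..\<beta>} \<subseteq> ?level"
    proof
      fix u assume "u \<in> U p - {\<alpha>..\<beta>}"
      then have "u \<in> U p - {\<alpha><..<\<beta>}" by auto
      then show "u \<in> ?level" using fixed by blast
    qed
    then show ?thesis using frame(2) compact_Icc by blast
  qed
  ultimately obtain C where "compact C" "C \<subseteq> N" "N - C \<subseteq> ?level"
    using compact_core_of_finite_union[of "chord_ends K0" U ?level] unfolding N_def by blast
  then show thesis using that by blast
qed

lemma locally_reparametrized_by_inv: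
  assumes "k_singular k K0" "long_knot K1" "fully_exposed K0"
    and C: "compact C" "C \<subseteq> N" and level: "\<And>u. u \<in> N - C \<Longrightarrow> \<phi> u = u \<and> pz (K0 u) = u"
  shows "locally_reparametrized k K0 K1 (\<lambda>s. if s \<in> C then inv \<phi> s else s) N C"
proof -
  let ?ch = "\<lambda>s. if s \<in> C then inv \<phi> s else s"
  have ch_on_N: "?ch s = inv \<phi> s" if "s \<in> N" for s
    using that level[of s] inv_\<phi>(1)[of s] by auto
  have in_U: "\<exists>p\<in>chord_ends K0. s \<in> U p \<and> inv \<phi> s \<in> U p" if s: "s \<in> N" for s
  proof -
    obtain p where p: "p \<in> chord_ends K0" "s \<in> U p" using s unfolding N_def by blast
    then obtain u where "u \<in> U p" "s = \<phi> u" using image_U[OF p(1)] by blast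
    then show ?thesis using p inv_\<phi>(1) by auto
  qed
  have "isCont ?ch s" for s
  proof (cases "s \<in> N")
    case True
    have "eventually (\<lambda>x. x \<in> N) (nhds s)" using open_N True by (rule eventually_nhds_in_open)
    then have "eventually (\<lambda>x. ?ch x = inv \<phi> x) (nhds s)" by (rule eventually_mono) (rule ch_on_N)
    moreover have "isCont (inv \<phi>) s"
      using strict_mono_surj_inv_continuous[OF strict_mono_\<phi> surj_\<phi>]
      by (simp add: continuous_on_eq_continuous_at)
    ultimately show ?thesis by (simp add: isCont_cong)
  next
    case False
    then have "eventually (\<lambda>x. x \<in> - C) (nhds s)"
      using C compact_imp_closed by (intro eventually_nhds_in_open) auto
    then have "eventually (\<lambda>x. ?ch x = x) (nhds s)" by (rule eventually_mono) simp
    then show ?thesis by (simp add: isCont_cong)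
  qed
  then have continuous_ch: "continuous_on UNIV ?ch"
    by (simp add: continuous_at_imp_continuous_on)
  show ?thesis
  proof
    show "inj_on ?ch N"
    proof (rule inj_onI)
      fix x y assume x: "x \<in> N" and y: "y \<in> N" and eq: "?ch x = ?ch y"
      have "inv \<phi> x = inv \<phi> y" using eq unfolding ch_on_N[OF x] ch_on_N[OF y] .
      then show "x = y" by (metis inv_\<phi>(2))
    qed
    show "K1 s = K0 (?ch s)" if s: "s \<in> N" for s
    proof -
      obtain p where "p \<in> chord_ends K0" "inv \<phi> s \<in> U p" using in_U[OF s] by blast
      then have "K1 (\<phi> (inv \<phi> s)) = K0 (inv \<phi> s)" by (rule K1_\<phi>_eq)
      then show ?thesis unfolding ch_on_N[OF s] inv_\<phi>(2) .
    qed
    show "closed_segment s (?ch s) \<subseteq> N" if s: "s \<in> N" for s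
    proof -
      obtain p where p: "p \<in> chord_ends K0" "s \<in> U p" "inv \<phi> s \<in> U p"
        using in_U[OF s] by blast
      obtain l r where "U p = {l<..<r}" using U_interval[OF p(1)] by blast
      then have "convex (U p)" by simp
      then have "closed_segment s (inv \<phi> s) \<subseteq> U p"
        using p(2,3) by (rule closed_segment_subset[rotated 2])
      moreover have "U p \<subseteq> N" using p(1) unfolding N_def by blast
      ultimately show ?thesis unfolding ch_on_N[OF s] by (rule subset_trans)
    qed
    show "pz (K0 s) = s \<and> pz (K1 s) = s" if s: "s \<notin> C" for s
    proof (cases "s \<in> N")
      case True
      then obtain p where "p \<in> chord_ends K0" "s \<in> U p" unfolding N_def by blast
      then have "K1 (\<phi> s) = K0 s" by (rule K1_\<phi>_eq)
      then show ?thesis using level[of s] True s by simp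
    qed (use outside_N in blast)
    show "py (K0 s) > 0 \<and> py (K1 s) > 0" if "s \<notin> N" for s
      using outside_N[OF that] by blast
    show "pz (K0 s) = s" if "py (K0 s) > 0" for s
      using almost_monotone_on_height_above_axis[OF almost_monotone_K0 assms(3) that] .
  qed (use assms C continuous_ch chord_ends_subset_N open_N in auto)
qed

end

theorem mainTheorem7:
  fixes k :: nat and K0 K1 :: "real \<Rightarrow> pt"
  assumes "k_singular k K0" and "k_singular k K1"
    and "almost_monotone K0" and "almost_monotone K1"
    and "fully_exposed K0" and "fully_exposed K1"
    and "\<exists>\<phi> U. strict_mono \<phi> \<and> surj \<phi>
           \<and> double_points K1 = (\<lambda>(a, b). (\<phi> a, \<phi> b)) ` double_points K0
           \<and> almost_monotone_on K0 U
           \<and> almost_monotone_on K1 (\<lambda>q. \<phi> ` U (inv \<phi> q))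
           \<and> (\<forall>p \<in> chord_ends K0. \<forall>s \<in> U p. K1 (\<phi> s) = K0 s)"
  shows "singular_isotopic k K0 K1"
proof -
  \<comment> \<open>The explicit neighbourhood systems make \<open>almost_monotone\<close> redundant, and only the
    exposure of \<open>K0\<close> is needed.\<close>
  obtain \<phi> U where \<phi>: "strict_mono \<phi>" "surj \<phi>"
    "double_points K1 = (\<lambda>(a, b). (\<phi> a, \<phi> b)) ` double_points K0"
    "almost_monotone_on K0 U" "almost_monotone_on K1 (\<lambda>q. \<phi> ` U (inv \<phi> q))"
    and agree: "\<forall>p \<in> chord_ends K0. \<forall>s \<in> U p. K1 (\<phi> s) = K0 s"
    using assms(7) by blast
  interpret matched_knots K0 K1 \<phi> U
    using \<phi> agree by unfold_locales blast+
  have "finite (double_points K0)" using assms(1) unfolding k_singular_def by blast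
  then obtain C where C: "compact C" "C \<subseteq> N" "\<And>u. u \<in> N - C \<Longrightarrow> \<phi> u = u \<and> pz (K0 u) = u"
    using compact_core by blast
  have "long_knot K1" using assms(2) unfolding k_singular_def by blast
  then interpret locally_reparametrized k K0 K1 "\<lambda>s. if s \<in> C then inv \<phi> s else s" N C
    using locally_reparametrized_by_inv[OF assms(1) _ assms(5) C] by blast
  show ?thesis by (rule singular_isotopic_K0_K1)
qed

end
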